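(* There exists a universal constant $C<\infty$ such that the following holds. Let $(a_{ijk})_{i,j\le n,k\le m}$ be real numbers, $T\subset\mathbb{R}^m$ a nonempty bounded set and $V$ a nonempty subset of $B_2^n\times (T-T)$. Then for every $(y,s)\in \mathbb{R}^n\times \mathbb{R}^m$, \[ F_A(V+(y,s))\leq F_A(V)+2\beta_{A,T}(y)+C\,\mathbb{E}\alpha_A(G_n\otimes s). \]
   Context: $G_n=(g_1,\dots,g_n)$ is a standard Gaussian vector in $\mathbb{R}^n$; $B_2^n$ the Euclidean unit ball; $T-T=\{t-t':t,t'\in T\}$. For $x\in\mathbb{R}^n,t\in\mathbb{R}^m$, $x\otimes t=(x_jt_k)_{j,k}$; for $y\in\mathbb{R}^{nm}$, $\alpha_A(y)=\big(\sum_{i}(\sum_{j,k}a_{ijk}y_{jk})^2\big)^{1/2}$. $\beta_{A,T}(x)=\mathbb{E}\sup_{t\in T}|\sum_{i,j,k}a_{ijk}g_ix_jt_k|$, and for $W\subset\mathbb{R}^n\times\mathbb{R}^m$, $F_A(W)=\mathbb{E}\sup_{(x,t)\in W}\sum_{i,j,k}a_{ijk}g_ix_jt_k$. *)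

theory Defs
  imports "HOL-Probability.Probability"
begin

(* Vectors of R^n are represented as functions nat => real supported on {..<n}
   (coordinates 0..n-1 instead of 1..n). *)
definition vecs :: "nat \<Rightarrow> (nat \<Rightarrow> real) set" where
  "vecs n = {x. \<forall>j\<ge>n. x j = 0}"

definition ball2 :: "nat \<Rightarrow> (nat \<Rightarrow> real) set" where
  "ball2 n = {x \<in> vecs n. (\<Sum>j<n. (x j)\<^sup>2) \<le> 1}"

definition bounded_in :: "nat \<Rightarrow> (nat \<Rightarrow> real) set \<Rightarrow> bool" where
  "bounded_in m T \<longleftrightarrow> (\<exists>R. \<forall>t\<in>T. \<forall>k<m. \<bar>t k\<bar> \<le> R)"

definition diffset :: "(nat \<Rightarrow> real) set \<Rightarrow> (nat \<Rightarrow> real) set" where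
  "diffset T = {(\<lambda>k. t k - t' k) | t t'. t \<in> T \<and> t' \<in> T}"

definition translate ::
  "((nat \<Rightarrow> real) \<times> (nat \<Rightarrow> real)) set \<Rightarrow> (nat \<Rightarrow> real) \<Rightarrow> (nat \<Rightarrow> real)
     \<Rightarrow> ((nat \<Rightarrow> real) \<times> (nat \<Rightarrow> real)) set" where
  "translate V y s = (\<lambda>(x, t). (\<lambda>j. x j + y j, \<lambda>k. t k + s k)) ` V"

definition gauss :: "nat \<Rightarrow> (nat \<Rightarrow> real) measure" where
  "gauss n = PiM {..<n} (\<lambda>_. density lborel std_normal_density)"

definition tensor :: "(nat \<Rightarrow> real) \<Rightarrow> (nat \<Rightarrow> real) \<Rightarrow> nat \<Rightarrow> nat \<Rightarrow> real" where
  "tensor x t = (\<lambda>j k. x j * t k)"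

definition alphaA :: "(nat \<Rightarrow> nat \<Rightarrow> nat \<Rightarrow> real) \<Rightarrow> nat \<Rightarrow> nat
     \<Rightarrow> (nat \<Rightarrow> nat \<Rightarrow> real) \<Rightarrow> real" where
  "alphaA a n m y = sqrt (\<Sum>i<n. (\<Sum>j<n. \<Sum>k<m. a i j k * y j k)\<^sup>2)"

definition form3 :: "(nat \<Rightarrow> nat \<Rightarrow> nat \<Rightarrow> real) \<Rightarrow> nat \<Rightarrow> nat
     \<Rightarrow> (nat \<Rightarrow> real) \<Rightarrow> (nat \<Rightarrow> real) \<Rightarrow> (nat \<Rightarrow> real) \<Rightarrow> real" where
  "form3 a n m g x t = (\<Sum>i<n. \<Sum>j<n. \<Sum>k<m. a i j k * g i * x j * t k)"

definition betaA :: "(nat \<Rightarrow> nat \<Rightarrow> nat \<Rightarrow> real) \<Rightarrow> nat \<Rightarrow> nat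
     \<Rightarrow> (nat \<Rightarrow> real) set \<Rightarrow> (nat \<Rightarrow> real) \<Rightarrow> real" where
  "betaA a n m T x = (\<integral>g. (SUP t\<in>T. \<bar>form3 a n m g x t\<bar>) \<partial>gauss n)"

definition FA :: "(nat \<Rightarrow> nat \<Rightarrow> nat \<Rightarrow> real) \<Rightarrow> nat \<Rightarrow> nat
     \<Rightarrow> ((nat \<Rightarrow> real) \<times> (nat \<Rightarrow> real)) set \<Rightarrow> real" where
  "FA a n m W = (\<integral>g. (SUP w\<in>W. form3 a n m g (fst w) (snd w)) \<partial>gauss n)"

end

theory Submission
  imports Defs
begin

text \<open>Expand the trilinear form at \<open>(x + y, t + s)\<close>. The \<open>(x, t)\<close> term gives
  \<open>F_A(V)\<close>; the \<open>(y, t)\<close> term with \<open>t = t\<^sub>1 - t\<^sub>2\<close> is at most \<open>2 sup\<^sub>T |.|\<close>,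
  giving \<open>2 \<beta>(y)\<close>; the \<open>(y, s)\<close> term is a centred Gaussian and vanishes in expectation.
  With the matrix \<open>B i j = \<Sum>\<^sub>k a i j k * s k\<close> one has \<open>\<alpha>(G \<otimes> s) = |B G|\<close>, and by
  Cauchy-Schwarz the \<open>(x, s)\<close> term is at most \<open>|B\<^sup>T G|\<close> for \<open>|x| \<le> 1\<close>. Finally
  \<open>E |B\<^sup>T G| \<le> |B|\<^sub>F \<le> sqrt (\<pi>/2) E |B G|\<close>: the first inequality is Jensen's, the
  second holds because \<open>E |\<langle>b, G\<rangle>| = sqrt (2/\<pi>) |b|\<close> for every row \<open>b\<close> of \<open>B\<close>.
  So \<open>C = sqrt (\<pi>/2)\<close> works.\<close>

lemma prob_space_gauss: "prob_space (gauss n)"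
  unfolding gauss_def by (intro prob_space_PiM) (simp add: prob_space_normal_density)

lemma space_gauss: "space (gauss n) = PiE {..<n} (\<lambda>_. UNIV)"
  unfolding gauss_def by (simp add: space_PiM)

lemma sets_gauss: "sets (gauss n) = sets (PiM {..<n} (\<lambda>_. borel))"
  unfolding gauss_def by (intro sets_PiM_cong) auto

lemma gauss_component_measurable [measurable]: "(\<lambda>g. g i) \<in> borel_measurable (gauss n)"
proof (cases "i < n")
  case True
  then show ?thesis
    by (simp add: measurable_cong_sets[OF sets_gauss refl])
next
  case False
  then have "\<And>g. g \<in> space (gauss n) \<Longrightarrow> g i = undefined"
    by (auto simp: space_gauss PiE_def extensional_def)
  then show ?thesis
    using measurable_cong[of "gauss n" "\<lambda>g. g i" "\<lambda>_. undefined" borel] by simp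
qed

lemma distr_gauss_component:
  assumes "i < n"
  shows "distr (gauss n) borel (\<lambda>g. g i) = std_normal_distribution"
proof -
  have "distr (gauss n) borel (\<lambda>g. g i) = distr (gauss n) std_normal_distribution (\<lambda>g. g i)"
    by (rule distr_cong) auto
  also have "\<dots> = std_normal_distribution"
    unfolding gauss_def using assms
    by (intro distr_PiM_component) (auto simp: prob_space_normal_density)
  finally show ?thesis .
qed

lemma indep_vars_gauss_components:
  "prob_space.indep_vars (gauss n) (\<lambda>_. borel) (\<lambda>i g. g i) {..<n}"
proof (cases "n = 0")
  case True
  then show ?thesis
    using prob_space_gauss gauss_component_measurable
    by (auto simp: prob_space.indep_vars_def prob_space.indep_sets_def)
next
  case False
  interpret prob_space "gauss n" by (rule prob_space_gauss)
  have "distr (gauss n) (PiM {..<n} (\<lambda>_. borel)) (\<lambda>g. \<lambda>i\<in>{..<n}. g i) =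
        distr (gauss n) (PiM {..<n} (\<lambda>_. borel)) (\<lambda>g. g)"
    by (rule distr_cong) (auto simp: space_gauss)
  also have "\<dots> = gauss n"
    by (rule distr_id2) (simp add: sets_gauss)
  also have "\<dots> = PiM {..<n} (\<lambda>i. distr (gauss n) borel (\<lambda>g. g i))"
    using distr_gauss_component[of _ n] unfolding gauss_def by (intro PiM_cong) auto
  finally show ?thesis
    using False by (subst indep_vars_iff_distr_eq_PiM) auto
qed

lemma gauss_identity_measurable: "(\<lambda>g. g) \<in> borel_measurable (gauss n)"
  by (rule measurable_coordinatewise_then_product) simp

definition lincomb :: "nat \<Rightarrow> (nat \<Rightarrow> real) \<Rightarrow> (nat \<Rightarrow> real) \<Rightarrow> real" where
  "lincomb n c g = (\<Sum>i<n. c i * g i)"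

lemma lincomb_measurable [measurable]: "lincomb n c \<in> borel_measurable (gauss n)"
  unfolding lincomb_def by measurable

lemma continuous_on_lincomb: "continuous_on UNIV (lincomb n c)"
  unfolding lincomb_def by (intro continuous_intros continuous_on_product_coordinates)

lemma lincomb_distributed_normal:
  assumes "\<exists>i<n. c i \<noteq> 0"
  shows "distributed (gauss n) lborel (lincomb n c) (normal_density 0 (L2_set c {..<n}))"
proof -
  interpret prob_space "gauss n" by (rule prob_space_gauss)
  define I where "I = {i. i < n \<and> c i \<noteq> 0}"
  have "I \<noteq> {}" "finite I" using assms by (auto simp: I_def)
  have lincomb_I: "lincomb n c = (\<lambda>g. \<Sum>i\<in>I. c i * g i)"
    unfolding lincomb_def I_def by (intro ext sum.mono_neutral_right) auto
  have L2_I: "L2_set c {..<n} = sqrt (\<Sum>i\<in>I. \<bar>c i\<bar>\<^sup>2)"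
    unfolding L2_set_def I_def by (auto intro!: sum.mono_neutral_right)
  have "indep_vars (\<lambda>_. borel) (\<lambda>i g. c i * g i) I"
    using indep_vars_compose2[OF indep_vars_subset[OF indep_vars_gauss_components],
        of I "\<lambda>i x. c i * x" "\<lambda>_. borel"]
    unfolding I_def by auto
  moreover have "distributed (gauss n) lborel (\<lambda>g. c i * g i) (normal_density 0 \<bar>c i\<bar>)"
    if "i \<in> I" for i
  proof -
    have "distributed (gauss n) lborel (\<lambda>g. g i) std_normal_density"
      using distr_gauss_component[of i n] that
      by (auto simp: distributed_def I_def distr_cong[OF refl sets_lborel[symmetric]])
    then show ?thesis
      using normal_density_affine[of "\<lambda>g. g i" 0 1 "c i" 0] that by (auto simp: I_def)
  qed
  ultimately show ?thesis
    using sum_indep_normal[OF \<open>finite I\<close> \<open>I \<noteq> {}\<close>, where X="\<lambda>i g. c i * g i"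
        and \<mu>="\<lambda>_. 0" and \<sigma>="\<lambda>i. \<bar>c i\<bar>"]
    unfolding lincomb_I L2_I by (simp add: I_def)
qed

text \<open>The hypotheses \<open>f 0 = 0\<close> and \<open>R 0 = 0\<close> take care of the degenerate case \<open>c = 0\<close> on
  \<open>{..<n}\<close>, where the linear combination is not normal but identically zero.\<close>

lemma has_bochner_integral_lincomb:
  fixes f :: "real \<Rightarrow> real" and R :: "real \<Rightarrow> real"
  assumes [measurable]: "f \<in> borel_measurable borel"
    and normal: "\<And>\<sigma>. 0 < \<sigma> \<Longrightarrow> has_bochner_integral lborel (\<lambda>x. normal_density 0 \<sigma> x * f x) (R \<sigma>)"
    and "f 0 = 0" "R 0 = 0"
  shows "has_bochner_integral (gauss n) (\<lambda>g. f (lincomb n c g)) (R (L2_set c {..<n}))"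
proof (cases "\<exists>i<n. c i \<noteq> 0")
  case True
  define \<sigma> where "\<sigma> = L2_set c {..<n}"
  have "0 < \<sigma>"
    using True L2_set_eq_0_iff[of "{..<n}" c] L2_set_nonneg[of c "{..<n}"] unfolding \<sigma>_def
    by (metis finite_lessThan lessThan_iff order_le_less)
  note D = lincomb_distributed_normal[OF True, folded \<sigma>_def]
  have "integrable (gauss n) (\<lambda>g. f (lincomb n c g))"
    using distributed_integrable[OF D] integrable.intros[OF normal[OF \<open>0 < \<sigma>\<close>]] by simp
  moreover have "integral\<^sup>L (gauss n) (\<lambda>g. f (lincomb n c g)) = R \<sigma>"
    using distributed_integral[OF D] has_bochner_integral_integral_eq[OF normal[OF \<open>0 < \<sigma>\<close>]]
    by simp
  ultimately show ?thesis
    unfolding \<sigma>_def by (simp add: has_bochner_integral_iff)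
next
  case False
  then have "lincomb n c = (\<lambda>_. 0)" "L2_set c {..<n} = 0"
    by (auto simp: lincomb_def L2_set_eq_0_iff)
  then show ?thesis
    using assms by (simp add: has_bochner_integral_zero)
qed

lemma has_bochner_integral_lincomb_mean:
  "has_bochner_integral (gauss n) (lincomb n c) 0"
  using has_bochner_integral_lincomb[where f="\<lambda>x. x" and R="\<lambda>_. 0"]
    normal_moment_odd[where k=0 and \<mu>=0] by simp

lemma has_bochner_integral_lincomb_abs:
  "has_bochner_integral (gauss n) (\<lambda>g. \<bar>lincomb n c g\<bar>) (sqrt (2 / pi) * L2_set c {..<n})"
  using has_bochner_integral_lincomb[where f=abs and R="\<lambda>\<sigma>. sqrt (2 / pi) * \<sigma>"]
    normal_moment_abs_odd[where k=0 and \<mu>=0] by (simp add: mult.commute)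

lemma has_bochner_integral_lincomb_square:
  "has_bochner_integral (gauss n) (\<lambda>g. (lincomb n c g)\<^sup>2) ((L2_set c {..<n})\<^sup>2)"
  using has_bochner_integral_lincomb[where f="\<lambda>x. x\<^sup>2" and R="\<lambda>\<sigma>. \<sigma>\<^sup>2"]
    normal_moment_even[where k=1 and \<mu>=0] by (simp add: power2_eq_square)

lemma integrable_l1_norm_gauss: "integrable (gauss n) (\<lambda>g. \<Sum>i<n. \<bar>g i\<bar>)"
proof (rule Bochner_Integration.integrable_sum)
  fix i assume "i \<in> {..<n}"
  then have "lincomb n (\<lambda>l. of_bool (l = i)) g = g i" for g
    by (simp add: lincomb_def if_distrib cong: if_cong)
  then show "integrable (gauss n) (\<lambda>g. \<bar>g i\<bar>)"
    using has_bochner_integral_lincomb_abs[of n "\<lambda>l. of_bool (l = i)"]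
    by (simp add: has_bochner_integral_iff)
qed

lemma borel_measurable_SUP_continuous:
  fixes \<phi> :: "'w \<Rightarrow> 'a::topological_space \<Rightarrow> real"
  assumes "W \<noteq> {}" and cont: "\<And>w. w \<in> W \<Longrightarrow> continuous_on UNIV (\<phi> w)"
    and bdd: "\<And>x. bdd_above ((\<lambda>w. \<phi> w x) ` W)"
  shows "(\<lambda>x. SUP w\<in>W. \<phi> w x) \<in> borel_measurable borel"
proof (rule borel_measurableI_greater)
  fix y :: real
  have "{x \<in> space borel. y < (SUP w\<in>W. \<phi> w x)} = (\<Union>w\<in>W. {x. y < \<phi> w x})"
    using less_cSUP_iff[OF \<open>W \<noteq> {}\<close> bdd] by auto
  moreover have "open (\<Union>w\<in>W. {x. y < \<phi> w x})"
    by (intro open_UN ballI open_Collect_less continuous_on_const cont)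
  ultimately show "{x \<in> space borel. y < (SUP w\<in>W. \<phi> w x)} \<in> sets borel"
    by simp
qed

lemma integrable_SUP_dominated:
  fixes \<phi> :: "'w \<Rightarrow> 'a::topological_space \<Rightarrow> real"
  assumes "(\<lambda>x. x) \<in> borel_measurable M" and "W \<noteq> {}"
    and "\<And>w. w \<in> W \<Longrightarrow> continuous_on UNIV (\<phi> w)"
    and bound: "\<And>w x. w \<in> W \<Longrightarrow> \<bar>\<phi> w x\<bar> \<le> h x" and "integrable M h"
  shows "integrable M (\<lambda>x. SUP w\<in>W. \<phi> w x)"
proof (rule Bochner_Integration.integrable_bound[OF \<open>integrable M h\<close>])
  have bdd: "bdd_above ((\<lambda>w. \<phi> w x) ` W)" for x
    using bound by (intro bdd_aboveI2[of _ _ "h x"]) (force simp: abs_le_iff)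
  show "(\<lambda>x. SUP w\<in>W. \<phi> w x) \<in> borel_measurable M"
    using measurable_compose[OF assms(1) borel_measurable_SUP_continuous[OF assms(2,3) bdd]] .
  show "AE x in M. norm (SUP w\<in>W. \<phi> w x) \<le> norm (h x)"
  proof (rule AE_I2)
    fix x
    obtain w0 where "w0 \<in> W" using \<open>W \<noteq> {}\<close> by blast
    have "(SUP w\<in>W. \<phi> w x) \<le> h x"
      using bound by (intro cSUP_least \<open>W \<noteq> {}\<close>) (force simp: abs_le_iff)
    moreover have "- h x \<le> \<phi> w0 x" "\<phi> w0 x \<le> (SUP w\<in>W. \<phi> w x)"
      using bound[OF \<open>w0 \<in> W\<close>, of x] cSUP_upper[OF \<open>w0 \<in> W\<close> bdd] by auto
    ultimately show "norm (SUP w\<in>W. \<phi> w x) \<le> norm (h x)"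
      by simp
  qed
qed

lemma bounded_in_singleton: "bounded_in n {y}"
  unfolding bounded_in_def by (auto intro: member_le_sum[of _ "{..<n}" "\<lambda>j. \<bar>y j\<bar>", simplified])

lemma bounded_in_ball2: "bounded_in n (ball2 n)"
  unfolding bounded_in_def
proof (intro exI ballI allI impI)
  fix x j assume "x \<in> ball2 n" "j < n"
  then have "(x j)\<^sup>2 \<le> 1"
    using member_le_sum[of j "{..<n}" "\<lambda>j. (x j)\<^sup>2"] by (auto simp: ball2_def)
  then show "\<bar>x j\<bar> \<le> 1" by (simp add: abs_square_le_1)
qed

lemma bounded_in_subset: "bounded_in n Y \<Longrightarrow> X \<subseteq> Y \<Longrightarrow> bounded_in n X"
  unfolding bounded_in_def by blast

lemma bounded_in_diffset:
  assumes "bounded_in m T"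
  shows "bounded_in m (diffset T)"
proof -
  obtain R where R: "\<And>t k. t \<in> T \<Longrightarrow> k < m \<Longrightarrow> \<bar>t k\<bar> \<le> R"
    using assms unfolding bounded_in_def by metis
  have "\<bar>t k - t' k\<bar> \<le> 2 * R" if "t \<in> T" "t' \<in> T" "k < m" for t t' k
    using R[OF that(1,3)] R[OF that(2,3)] by linarith
  then show ?thesis
    unfolding bounded_in_def diffset_def by blast
qed

lemma bounded_in_translate:
  assumes "bounded_in n X"
  shows "bounded_in n ((\<lambda>x j. x j + y j) ` X)"
proof -
  obtain R where R: "\<And>x j. x \<in> X \<Longrightarrow> j < n \<Longrightarrow> \<bar>x j\<bar> \<le> R"
    using assms unfolding bounded_in_def by metis
  obtain R' where R': "\<And>j. j < n \<Longrightarrow> \<bar>y j\<bar> \<le> R'"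
    using bounded_in_singleton unfolding bounded_in_def by blast
  have "\<bar>x j + y j\<bar> \<le> R + R'" if "x \<in> X" "j < n" for x j
    using abs_triangle_ineq[of "x j" "y j"] R[OF that] R'[OF that(2)] by linarith
  then show ?thesis
    unfolding bounded_in_def by blast
qed

lemma
  assumes "V \<subseteq> ball2 n \<times> diffset T" "bounded_in m T"
  shows bounded_in_fst: "bounded_in n (fst ` V)"
    and bounded_in_snd: "bounded_in m (snd ` V)"
proof -
  have "fst ` V \<subseteq> ball2 n" "snd ` V \<subseteq> diffset T"
    using assms(1) by auto
  then show "bounded_in n (fst ` V)" "bounded_in m (snd ` V)"
    using bounded_in_subset bounded_in_ball2 bounded_in_diffset[OF assms(2)] by blast+
qed

lemma form3_eq_lincomb:
  "form3 a n m g x t = lincomb n (\<lambda>i. \<Sum>j<n. \<Sum>k<m. a i j k * x j * t k) g"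
  unfolding form3_def lincomb_def by (simp add: sum_distrib_left mult_ac)

lemma continuous_on_form3: "continuous_on UNIV (\<lambda>g. form3 a n m g x t)"
  unfolding form3_eq_lincomb using continuous_on_lincomb by (simp add: fun_eq_iff[symmetric])

lemma form3_dominated:
  assumes "bounded_in n X" "bounded_in m Y"
  shows "\<exists>K. \<forall>x\<in>X. \<forall>t\<in>Y. \<forall>g. \<bar>form3 a n m g x t\<bar> \<le> K * (\<Sum>i<n. \<bar>g i\<bar>)"
proof -
  obtain R1 R2 where R1: "\<And>x j. x \<in> X \<Longrightarrow> j < n \<Longrightarrow> \<bar>x j\<bar> \<le> R1"
    and R2: "\<And>t k. t \<in> Y \<Longrightarrow> k < m \<Longrightarrow> \<bar>t k\<bar> \<le> R2"
    using assms unfolding bounded_in_def by metis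
  define K where "K = (\<Sum>i<n. \<Sum>j<n. \<Sum>k<m. \<bar>a i j k\<bar> * R1 * R2)"
  have "\<bar>form3 a n m g x t\<bar> \<le> K * (\<Sum>i<n. \<bar>g i\<bar>)" if "x \<in> X" "t \<in> Y" for x t g
  proof -
    have "\<bar>form3 a n m g x t\<bar> \<le> (\<Sum>i<n. \<Sum>j<n. \<Sum>k<m. \<bar>a i j k * g i * x j * t k\<bar>)"
      unfolding form3_def by (intro order_trans[OF sum_abs] sum_mono order_trans[OF sum_abs]) simp
    also have "\<dots> \<le> (\<Sum>i<n. \<Sum>j<n. \<Sum>k<m. \<bar>a i j k\<bar> * R1 * R2 * (\<Sum>l<n. \<bar>g l\<bar>))"
    proof (intro sum_mono)
      fix i j k assume "i \<in> {..<n}" "j \<in> {..<n}" "k \<in> {..<m}"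
      then have "\<bar>g i\<bar> \<le> (\<Sum>l<n. \<bar>g l\<bar>)" "\<bar>x j\<bar> \<le> R1" "\<bar>t k\<bar> \<le> R2"
        using R1 R2 that by (auto intro: member_le_sum)
      then have "\<bar>a i j k\<bar> * (\<bar>g i\<bar> * \<bar>x j\<bar> * \<bar>t k\<bar>) \<le> \<bar>a i j k\<bar> * ((\<Sum>l<n. \<bar>g l\<bar>) * R1 * R2)"
        by (intro mult_left_mono mult_mono) auto
      then show "\<bar>a i j k * g i * x j * t k\<bar> \<le> \<bar>a i j k\<bar> * R1 * R2 * (\<Sum>l<n. \<bar>g l\<bar>)"
        by (simp add: abs_mult mult_ac)
    qed
    also have "\<dots> = K * (\<Sum>i<n. \<bar>g i\<bar>)"
      unfolding K_def by (simp add: sum_distrib_right)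
    finally show ?thesis .
  qed
  then show ?thesis by blast
qed

lemma
  assumes "W \<noteq> {}" "bounded_in n (fst ` W)" "bounded_in m (snd ` W)"
  shows integrable_SUP_form3:
      "integrable (gauss n) (\<lambda>g. SUP w\<in>W. form3 a n m g (fst w) (snd w))"
    and bdd_above_form3: "bdd_above ((\<lambda>w. form3 a n m g (fst w) (snd w)) ` W)"
proof -
  obtain K where K: "\<And>w g. w \<in> W \<Longrightarrow> \<bar>form3 a n m g (fst w) (snd w)\<bar> \<le> K * (\<Sum>i<n. \<bar>g i\<bar>)"
    using form3_dominated[OF assms(2,3), where a=a] by blast
  show "integrable (gauss n) (\<lambda>g. SUP w\<in>W. form3 a n m g (fst w) (snd w))"
    by (intro integrable_SUP_dominated[OF gauss_identity_measurable \<open>W \<noteq> {}\<close>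
          continuous_on_form3 K] integrable_mult_right integrable_l1_norm_gauss)
  show "bdd_above ((\<lambda>w. form3 a n m g (fst w) (snd w)) ` W)"
    using K by (intro bdd_aboveI2[of _ _ "K * (\<Sum>i<n. \<bar>g i\<bar>)"]) (force simp: abs_le_iff)
qed

lemma
  assumes "T \<noteq> {}" "bounded_in m T"
  shows integrable_SUP_abs_form3: "integrable (gauss n) (\<lambda>g. SUP t\<in>T. \<bar>form3 a n m g y t\<bar>)"
    and bdd_above_abs_form3: "bdd_above ((\<lambda>t. \<bar>form3 a n m g y t\<bar>) ` T)"
proof -
  obtain K where K: "\<And>t g. t \<in> T \<Longrightarrow> \<bar>form3 a n m g y t\<bar> \<le> K * (\<Sum>i<n. \<bar>g i\<bar>)"
    using form3_dominated[OF bounded_in_singleton assms(2), where a=a] by blast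
  show "integrable (gauss n) (\<lambda>g. SUP t\<in>T. \<bar>form3 a n m g y t\<bar>)"
    using K integrable_l1_norm_gauss
    by (intro integrable_SUP_dominated[OF gauss_identity_measurable \<open>T \<noteq> {}\<close>]
        continuous_on_rabs continuous_on_form3 integrable_mult_right) auto
  show "bdd_above ((\<lambda>t. \<bar>form3 a n m g y t\<bar>) ` T)"
    using K by (intro bdd_aboveI2[of _ _ "K * (\<Sum>i<n. \<bar>g i\<bar>)"]) auto
qed

definition mat_vec_norm :: "nat \<Rightarrow> (nat \<Rightarrow> nat \<Rightarrow> real) \<Rightarrow> (nat \<Rightarrow> real) \<Rightarrow> real" where
  "mat_vec_norm n c g = L2_set (\<lambda>j. lincomb n (c j) g) {..<n}"

definition frobenius_norm :: "nat \<Rightarrow> (nat \<Rightarrow> nat \<Rightarrow> real) \<Rightarrow> real" where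
  "frobenius_norm n c = L2_set (\<lambda>j. L2_set (c j) {..<n}) {..<n}"

lemma frobenius_norm_transpose: "frobenius_norm n (\<lambda>j i. c i j) = frobenius_norm n c"
proof -
  have "(\<Sum>j<n. \<Sum>i<n. (c i j)\<^sup>2) = (\<Sum>i<n. \<Sum>j<n. (c i j)\<^sup>2)"
    by (rule sum.swap)
  then show ?thesis
    unfolding frobenius_norm_def L2_set_def by (simp add: sum_nonneg)
qed

lemma mat_vec_norm_measurable [measurable]: "mat_vec_norm n c \<in> borel_measurable (gauss n)"
  unfolding mat_vec_norm_def L2_set_def by measurable

lemma integrable_mat_vec_norm: "integrable (gauss n) (mat_vec_norm n c)"
proof (rule Bochner_Integration.integrable_bound)
  show "integrable (gauss n) (\<lambda>g. \<Sum>j<n. \<bar>lincomb n (c j) g\<bar>)"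
    using has_bochner_integral_lincomb_abs by (auto simp: has_bochner_integral_iff)
  show "AE g in gauss n. norm (mat_vec_norm n c g) \<le> norm (\<Sum>j<n. \<bar>lincomb n (c j) g\<bar>)"
    using L2_set_le_sum_abs by (auto simp: mat_vec_norm_def L2_set_nonneg)
qed simp

lemma sum_abs_lincomb_le_mat_vec_norm:
  assumes "L2_set w {..<n} \<le> 1"
  shows "(\<Sum>j<n. \<bar>w j\<bar> * \<bar>lincomb n (c j) g\<bar>) \<le> mat_vec_norm n c g"
proof -
  have "(\<Sum>j<n. \<bar>w j\<bar> * \<bar>lincomb n (c j) g\<bar>) \<le> L2_set w {..<n} * mat_vec_norm n c g"
    unfolding mat_vec_norm_def by (rule L2_set_mult_ineq)
  also have "\<dots> \<le> mat_vec_norm n c g"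
    using mult_right_mono[OF assms] by (simp add: mat_vec_norm_def L2_set_nonneg)
  finally show ?thesis .
qed

lemma integral_mat_vec_norm_le: "integral\<^sup>L (gauss n) (mat_vec_norm n c) \<le> frobenius_norm n c"
proof -
  interpret prob_space "gauss n" by (rule prob_space_gauss)
  have square: "has_bochner_integral (gauss n) (\<lambda>g. (mat_vec_norm n c g)\<^sup>2) ((frobenius_norm n c)\<^sup>2)"
  proof -
    have "has_bochner_integral (gauss n) (\<lambda>g. \<Sum>j<n. (lincomb n (c j) g)\<^sup>2)
        (\<Sum>j<n. (L2_set (c j) {..<n})\<^sup>2)"
      by (intro has_bochner_integral_sum has_bochner_integral_lincomb_square)
    then show ?thesis
      by (simp add: mat_vec_norm_def frobenius_norm_def L2_set_def sum_nonneg)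
  qed
  have "(expectation (mat_vec_norm n c))\<^sup>2 \<le> expectation (\<lambda>g. (mat_vec_norm n c g)\<^sup>2)"
    using variance_positive[of "mat_vec_norm n c"]
      variance_eq[OF integrable_mat_vec_norm integrable.intros[OF square]]
    by simp
  also have "\<dots> = (frobenius_norm n c)\<^sup>2"
    using square by (rule has_bochner_integral_integral_eq)
  finally show ?thesis
    by (rule power2_le_imp_le) (simp add: frobenius_norm_def)
qed

lemma frobenius_norm_le_integral_mat_vec_norm:
  "sqrt (2 / pi) * frobenius_norm n c \<le> integral\<^sup>L (gauss n) (mat_vec_norm n c)"
proof -
  define \<rho> where "\<rho> j = L2_set (c j) {..<n}" for j
  define L where "L = frobenius_norm n c"
  have L_def': "L = L2_set \<rho> {..<n}" and "0 \<le> L"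
    unfolding L_def \<rho>_def frobenius_norm_def by (simp_all add: L2_set_nonneg)
  \<comment> \<open>test against the unit vector of row norms \<open>\<rho> / L\<close>\<close>
  have weights: "L2_set (\<lambda>j. \<rho> j / L) {..<n} \<le> 1"
    using \<open>0 \<le> L\<close> L2_set_right_distrib[of "inverse L" \<rho> "{..<n}"]
    by (cases "L = 0") (simp_all add: L_def'[symmetric] divide_inverse mult.commute)
  have pointwise: "(\<Sum>j<n. \<rho> j / L * \<bar>lincomb n (c j) g\<bar>) \<le> mat_vec_norm n c g" for g
    using sum_abs_lincomb_le_mat_vec_norm[OF weights] \<open>0 \<le> L\<close> by (simp add: \<rho>_def L2_set_nonneg)
  have "has_bochner_integral (gauss n) (\<lambda>g. \<Sum>j<n. \<rho> j / L * \<bar>lincomb n (c j) g\<bar>)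
      (\<Sum>j<n. \<rho> j / L * (sqrt (2 / pi) * \<rho> j))"
    unfolding \<rho>_def
    by (intro has_bochner_integral_sum has_bochner_integral_mult_right
        has_bochner_integral_lincomb_abs)
  also have "(\<Sum>j<n. \<rho> j / L * (sqrt (2 / pi) * \<rho> j)) = sqrt (2 / pi) * (L\<^sup>2 / L)"
    by (simp add: L_def' L2_set_def sum_nonneg power2_eq_square sum_divide_distrib
        sum_distrib_left mult_ac)
  also have "L\<^sup>2 / L = L"
    by (simp add: power2_eq_square)
  finally have lower: "has_bochner_integral (gauss n)
      (\<lambda>g. \<Sum>j<n. \<rho> j / L * \<bar>lincomb n (c j) g\<bar>) (sqrt (2 / pi) * L)" .
  have "sqrt (2 / pi) * L = (\<integral>g. (\<Sum>j<n. \<rho> j / L * \<bar>lincomb n (c j) g\<bar>) \<partial>gauss n)"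
    using lower by (simp add: has_bochner_integral_iff)
  also have "\<dots> \<le> integral\<^sup>L (gauss n) (mat_vec_norm n c)"
    using lower by (intro integral_mono[OF _ integrable_mat_vec_norm pointwise])
      (simp add: has_bochner_integral_iff)
  finally show ?thesis
    unfolding L_def .
qed

lemma integral_mat_vec_norm_transpose_le:
  "integral\<^sup>L (gauss n) (mat_vec_norm n (\<lambda>j i. c i j))
    \<le> sqrt (pi / 2) * integral\<^sup>L (gauss n) (mat_vec_norm n c)"
proof -
  have "integral\<^sup>L (gauss n) (mat_vec_norm n (\<lambda>j i. c i j)) \<le> frobenius_norm n c"
    using integral_mat_vec_norm_le frobenius_norm_transpose by metis
  also have "\<dots> = sqrt (pi / 2) * (sqrt (2 / pi) * frobenius_norm n c)"
    by (simp add: real_sqrt_mult[symmetric])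
  also have "\<dots> \<le> sqrt (pi / 2) * integral\<^sup>L (gauss n) (mat_vec_norm n c)"
    by (intro mult_left_mono frobenius_norm_le_integral_mat_vec_norm) simp
  finally show ?thesis .
qed

lemma alphaA_tensor: "alphaA a n m (tensor g s) = mat_vec_norm n (\<lambda>i j. \<Sum>k<m. a i j k * s k) g"
  unfolding alphaA_def mat_vec_norm_def L2_set_def lincomb_def tensor_def
  by (simp add: sum_distrib_left sum_distrib_right mult_ac)

lemma form3_le_mat_vec_norm:
  assumes "x \<in> ball2 n"
  shows "form3 a n m g x s \<le> mat_vec_norm n (\<lambda>j i. \<Sum>k<m. a i j k * s k) g"
proof -
  have "form3 a n m g x s = (\<Sum>j<n. x j * lincomb n (\<lambda>i. \<Sum>k<m. a i j k * s k) g)"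
    unfolding form3_def lincomb_def
    by (subst sum.swap) (simp add: sum_distrib_left sum_distrib_right mult_ac)
  also have "\<dots> \<le> (\<Sum>j<n. \<bar>x j\<bar> * \<bar>lincomb n (\<lambda>i. \<Sum>k<m. a i j k * s k) g\<bar>)"
    by (intro sum_mono) (simp add: abs_mult[symmetric])
  also have "\<dots> \<le> mat_vec_norm n (\<lambda>j i. \<Sum>k<m. a i j k * s k) g"
    using assms by (intro sum_abs_lincomb_le_mat_vec_norm) (simp add: ball2_def L2_set_def)
  finally show ?thesis .
qed

lemma form3_translate:
  "form3 a n m g (\<lambda>j. x j + y j) (\<lambda>k. t k + s k) =
   form3 a n m g x t + form3 a n m g y t + form3 a n m g x s + form3 a n m g y s"
  unfolding form3_def by (simp add: algebra_simps sum.distrib)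

lemma form3_diffset_le:
  assumes "t \<in> diffset T" "bdd_above ((\<lambda>t. \<bar>form3 a n m g y t\<bar>) ` T)"
  shows "form3 a n m g y t \<le> 2 * (SUP t\<in>T. \<bar>form3 a n m g y t\<bar>)"
proof -
  obtain t1 t2 where "t1 \<in> T" "t2 \<in> T" and t: "t = (\<lambda>k. t1 k - t2 k)"
    using assms(1) unfolding diffset_def by blast
  have "form3 a n m g y t = form3 a n m g y t1 - form3 a n m g y t2"
    unfolding t form3_def by (simp add: algebra_simps sum_subtractf)
  also have "\<dots> \<le> \<bar>form3 a n m g y t1\<bar> + \<bar>form3 a n m g y t2\<bar>"
    by linarith
  also have "\<dots> \<le> 2 * (SUP t\<in>T. \<bar>form3 a n m g y t\<bar>)"
    using cSUP_upper[OF \<open>t1 \<in> T\<close> assms(2)] cSUP_upper[OF \<open>t2 \<in> T\<close> assms(2)] by linarith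
  finally show ?thesis .
qed

lemma SUP_form3_translate_le:
  assumes "V \<noteq> {}" "V \<subseteq> ball2 n \<times> diffset T" "T \<noteq> {}" "bounded_in m T"
  shows "(SUP w\<in>V. form3 a n m g (\<lambda>j. fst w j + y j) (\<lambda>k. snd w k + s k))
    \<le> (SUP w\<in>V. form3 a n m g (fst w) (snd w)) + 2 * (SUP t\<in>T. \<bar>form3 a n m g y t\<bar>)
      + mat_vec_norm n (\<lambda>j i. \<Sum>k<m. a i j k * s k) g + form3 a n m g y s"
proof (rule cSUP_least[OF \<open>V \<noteq> {}\<close>])
  fix w assume "w \<in> V"
  then have "fst w \<in> ball2 n" "snd w \<in> diffset T"
    using assms(2) by auto
  have "form3 a n m g (fst w) (snd w) \<le> (SUP w\<in>V. form3 a n m g (fst w) (snd w))"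
    using \<open>w \<in> V\<close> assms
    by (intro cSUP_upper bdd_above_form3 bounded_in_fst bounded_in_snd) auto
  then show "form3 a n m g (\<lambda>j. fst w j + y j) (\<lambda>k. snd w k + s k)
    \<le> (SUP w\<in>V. form3 a n m g (fst w) (snd w)) + 2 * (SUP t\<in>T. \<bar>form3 a n m g y t\<bar>)
      + mat_vec_norm n (\<lambda>j i. \<Sum>k<m. a i j k * s k) g + form3 a n m g y s"
    using form3_diffset_le[OF \<open>snd w \<in> diffset T\<close>
        bdd_above_abs_form3[OF assms(3,4), where a=a and n=n and g=g and y=y]]
      form3_le_mat_vec_norm[OF \<open>fst w \<in> ball2 n\<close>, where a=a and m=m and g=g and s=s]
    unfolding form3_translate by linarith
qed

lemma FA_translate_le:
  assumes "V \<noteq> {}" "V \<subseteq> ball2 n \<times> diffset T" "T \<noteq> {}" "bounded_in m T"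
  shows "FA a n m (translate V y s) \<le> FA a n m V + 2 * betaA a n m T y
    + integral\<^sup>L (gauss n) (mat_vec_norm n (\<lambda>j i. \<Sum>k<m. a i j k * s k))"
proof -
  let ?Q = "mat_vec_norm n (\<lambda>j i. \<Sum>k<m. a i j k * s k)"
  have "fst ` translate V y s = (\<lambda>x j. x j + y j) ` fst ` V"
    "snd ` translate V y s = (\<lambda>t k. t k + s k) ` snd ` V"
    by (force simp: translate_def)+
  then have "bounded_in n (fst ` translate V y s)" "bounded_in m (snd ` translate V y s)"
    using bounded_in_fst[OF assms(2,4)] bounded_in_snd[OF assms(2,4)]
    by (simp_all add: bounded_in_translate)
  then have "integrable (gauss n) (\<lambda>g. SUP w\<in>translate V y s. form3 a n m g (fst w) (snd w))"
    using assms(1) by (intro integrable_SUP_form3) (auto simp: translate_def)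
  then have int_translated: "integrable (gauss n)
      (\<lambda>g. SUP w\<in>V. form3 a n m g (\<lambda>j. fst w j + y j) (\<lambda>k. snd w k + s k))"
    by (simp add: translate_def image_image case_prod_beta)
  have int_V: "integrable (gauss n) (\<lambda>g. SUP w\<in>V. form3 a n m g (fst w) (snd w))"
    using assms by (intro integrable_SUP_form3 bounded_in_fst bounded_in_snd)
  have int_T: "integrable (gauss n) (\<lambda>g. SUP t\<in>T. \<bar>form3 a n m g y t\<bar>)"
    using assms by (intro integrable_SUP_abs_form3)
  have mean_zero: "has_bochner_integral (gauss n) (\<lambda>g. form3 a n m g y s) 0"
    unfolding form3_eq_lincomb by (rule has_bochner_integral_lincomb_mean)
  have "FA a n m (translate V y s)
    = (\<integral>g. (SUP w\<in>V. form3 a n m g (\<lambda>j. fst w j + y j) (\<lambda>k. snd w k + s k)) \<partial>gauss n)"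
    by (simp add: FA_def translate_def image_image case_prod_beta)
  also have "\<dots> \<le> (\<integral>g. (SUP w\<in>V. form3 a n m g (fst w) (snd w))
      + 2 * (SUP t\<in>T. \<bar>form3 a n m g y t\<bar>) + ?Q g + form3 a n m g y s \<partial>gauss n)"
    using int_V int_T integrable_mat_vec_norm mean_zero
    by (intro integral_mono int_translated SUP_form3_translate_le assms)
      (simp add: has_bochner_integral_iff)
  also have "\<dots> = FA a n m V + 2 * betaA a n m T y + integral\<^sup>L (gauss n) ?Q"
    using int_V int_T integrable_mat_vec_norm mean_zero
    by (simp add: FA_def betaA_def has_bochner_integral_iff)
  finally show ?thesis .
qed

theorem lemma5p11:
  shows "\<exists>C::real. \<forall>(n::nat) (m::nat) (a::nat \<Rightarrow> nat \<Rightarrow> nat \<Rightarrow> real) T V y s.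
     T \<subseteq> vecs m \<and> T \<noteq> {} \<and> bounded_in m T \<and>
     V \<noteq> {} \<and> V \<subseteq> ball2 n \<times> diffset T \<and> y \<in> vecs n \<and> s \<in> vecs m \<longrightarrow>
     FA a n m (translate V y s) \<le>
       FA a n m V + 2 * betaA a n m T y + C * (\<integral>g. alphaA a n m (tensor g s) \<partial>gauss n)"
proof (intro exI[of _ "sqrt (pi / 2)"] allI impI, elim conjE)
  fix n m :: nat and a :: "nat \<Rightarrow> nat \<Rightarrow> nat \<Rightarrow> real" and T V y s
  assume "T \<noteq> {}" "bounded_in m T" "V \<noteq> {}" "V \<subseteq> ball2 n \<times> diffset T"
  define c where "c i j = (\<Sum>k<m. a i j k * s k)" for i j
  have "FA a n m (translate V y s)
      \<le> FA a n m V + 2 * betaA a n m T y + integral\<^sup>L (gauss n) (mat_vec_norm n (\<lambda>j i. c i j))"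
    unfolding c_def using FA_translate_le \<open>T \<noteq> {}\<close> \<open>bounded_in m T\<close> \<open>V \<noteq> {}\<close>
      \<open>V \<subseteq> ball2 n \<times> diffset T\<close> by blast
  also have "integral\<^sup>L (gauss n) (mat_vec_norm n (\<lambda>j i. c i j))
      \<le> sqrt (pi / 2) * integral\<^sup>L (gauss n) (mat_vec_norm n c)"
    by (rule integral_mat_vec_norm_transpose_le)
  also have "mat_vec_norm n c = (\<lambda>g. alphaA a n m (tensor g s))"
    unfolding c_def by (simp add: alphaA_tensor)
  finally show "FA a n m (translate V y s) \<le> FA a n m V + 2 * betaA a n m T y
      + sqrt (pi / 2) * (\<integral>g. alphaA a n m (tensor g s) \<partial>gauss n)"
    by simp
qed

end
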